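(* Let $N\ge 2$ and $T\ge 1$ be integers, let $a_1,\ldots,a_N$ be real numbers with $a_1+\cdots+a_N=1$, and let $\mu_1,\ldots,\mu_T$ be real numbers. Let $J$ be the $((N-1)T+1)\times((N-1)T+1)$ real matrix defined as follows (with $e_k$ denoting the $k$-th standard basis row vector of length $(N-1)T+1$): - for $i=1,\ldots,(N-2)T+1$, the $i$-th row of $J$ is $e_{i+T}$; - for $m=1,\ldots,T$, the $((N-2)T+1+m)$-th row of $J$ is $r_m$, where $r_0:=e_{(N-1)T+1}$ and recursively $$r_m=\mu_m\Big(a_1\, r_{m-1}+\sum_{l=2}^{N} a_l\, e_{(N-l)T+m}\Big),\qquad m=1,\ldots,T.$$ Then the characteristic polynomial $\det(\lambda I-J)$ of $J$ equals $$p(\lambda)=\lambda^{(N-1)T+1}-(\mu_1\cdots\mu_T)\,\big(a_1\lambda^{N-1}+a_2\lambda^{N-2}+\cdots+a_{N-1}\lambda+a_N\big)^{T}.$$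
   Context: Motivation/setting: for a $C^1$ map $f:\mathbb{R}\to\mathbb{R}$ with a $T$-cycle $x_0^*,\ldots,x_{T-1}^*$ and the delayed feedback control $x(k+1)=f(x(k))+u(k)$, $u(k)=(a_1-1)f(x(k))+a_2f(x(k-T))+\cdots+a_Nf(x(k-(N-1)T))$, define $G:\mathbb{R}^{(N-1)T+1}\to\mathbb{R}^{(N-1)T+1}$ by $G(x_1,\ldots,x_{(N-1)T+1})=(x_2,\ldots,x_{(N-1)T+1},\,a_1f(x_{(N-1)T+1})+a_2f(x_{(N-2)T+1})+\cdots+a_Nf(x_1))$ and $F=G^T$. The matrix $J$ above is the Jacobian of $F$ at the point $(x_0^*,\ldots,x^*_{(N-1)T})$ (indices mod $T$), with $\mu_j$ the derivatives of $f$ along the cycle; the statement concerns the explicitly defined matrix for arbitrary real $\mu_j$. *)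

theory Defs
  imports "Jordan_Normal_Form.Char_Poly"
begin

(* Convention: indices of a and mu are 1-based (a 1 .. a N, mu 1 .. mu T), as in the paper.
   Matrix rows/columns are 0-based in Jordan_Normal_Form: the paper's e_k is the
   indicator of column k-1. *)

fun dfc_row :: "nat \<Rightarrow> nat \<Rightarrow> (nat \<Rightarrow> real) \<Rightarrow> (nat \<Rightarrow> real) \<Rightarrow> nat \<Rightarrow> (nat \<Rightarrow> real)" where
  "dfc_row N T a mu 0 = (\<lambda>j. if j = (N - 1) * T then 1 else 0)"
| "dfc_row N T a mu (Suc m) = (\<lambda>j. mu (Suc m) *
      (a 1 * dfc_row N T a mu m j
       + (\<Sum>l = 2..N. a l * (if j = (N - l) * T + Suc m - 1 then 1 else 0))))"

definition dfc_jacobian :: "nat \<Rightarrow> nat \<Rightarrow> (nat \<Rightarrow> real) \<Rightarrow> (nat \<Rightarrow> real) \<Rightarrow> real mat" where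
  "dfc_jacobian N T a mu = mat ((N - 1) * T + 1) ((N - 1) * T + 1)
     (\<lambda>(i, j). if i < (N - 2) * T + 1 then (if j = i + T then 1 else 0)
               else dfc_row N T a mu (i + 1 - ((N - 2) * T + 1)) j)"

end

theory Submission
  imports Defs
begin

(* Fix x \<noteq> 0 and let S be the shift by T, so that the first (N-2)T+1 rows of x I - J are those
   of x I - S. Right multiplication by U = (I - S/x)\<^sup>-\<^sup>1 turns these rows into x e_i, and in the T
   feedback rows it maps each e_((N-l)T+m) to a power of 1/x times a single unit vector of the
   feedback block. Subtracting \<mu>_m a_1 times the previous feedback row then leaves, in that block,
   x I minus a subdiagonal chain with weights \<mu>_m x Q(x), Q(x) = \<Sigma> a_l x^-(l-1), closed by the entry
   \<mu>_1 Q(x) in the last column; one column operation on the last column makes the matrix lower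
   triangular with diagonal x, ..., x, x - (\<Pi> \<mu>_m) Q(x)^T. All three transformations are
   unitriangular, so det(x I - J) = x^(n-1) (x - (\<Pi> \<mu>_m) Q(x)^T) = p(x) for every x \<noteq> 0. *)

lemma sum_indicator_mult:
  fixes f :: "'b \<Rightarrow> 'a::semiring_0"
  assumes "finite S" "p \<in> S"
  shows "(\<Sum>k\<in>S. (if k = p then c else 0) * f k) = c * f p"
  using assms by (simp add: if_distrib[of "\<lambda>z. z * _"] sum.delta cong: if_cong)

lemma sum_two_indicators_mult:
  fixes f :: "'b \<Rightarrow> 'a::ring"
  assumes "finite S"
  shows "(\<Sum>k\<in>S. ((if k = p then \<alpha> else 0) - (if k = q then \<beta> else 0)) * f k)
     = (if p \<in> S then \<alpha> * f p else 0) - (if q \<in> S then \<beta> * f q else 0)"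
  using assms
  by (simp add: left_diff_distrib sum_subtractf if_distrib[of "\<lambda>z. z * _"] sum.delta cong: if_cong)

lemma poly_eqI_cofinite:
  fixes p q :: "'a::{idom, ring_char_0} poly"
  assumes "\<And>x. x \<notin> S \<Longrightarrow> poly p x = poly q x" and "finite S"
  shows "p = q"
proof (rule ccontr)
  assume "p \<noteq> q"
  then have "finite {x. poly (p - q) x = 0}" by (intro poly_roots_finite) simp
  moreover have "- S \<subseteq> {x. poly (p - q) x = 0}" using assms(1) by auto
  ultimately have "finite (S \<union> - S)" using assms(2) by (meson finite_UnI finite_subset)
  then show False using infinite_UNIV_char_0[where 'a='a] by simp
qed

(* The series \<Sigma>_q x^-q S^q = (I - S/x)\<^sup>-\<^sup>1 for the shift S by T: entry x^-q at (k, k + q T). *)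
definition shift_resolvent_mat :: "nat \<Rightarrow> nat \<Rightarrow> 'a::field \<Rightarrow> 'a mat" where
  "shift_resolvent_mat n T x = mat n n (\<lambda>(k, c).
     if k \<le> c \<and> k mod T = c mod T then inverse x ^ ((c - k) div T) else 0)"

definition subdiag_elim_mat :: "nat \<Rightarrow> nat \<Rightarrow> (nat \<Rightarrow> 'a::comm_ring_1) \<Rightarrow> 'a mat" where
  "subdiag_elim_mat n K d = mat n n (\<lambda>(i, k).
     (if i = k then 1 else 0) - (if K < i \<and> k = i - 1 then d i else 0))"

definition last_col_elim_mat :: "nat \<Rightarrow> nat \<Rightarrow> (nat \<Rightarrow> 'a::comm_ring_1) \<Rightarrow> 'a mat" where
  "last_col_elim_mat n K y = mat n n (\<lambda>(k, c).
     (if k = c then 1 else 0) + (if c = n - 1 \<and> K \<le> k \<and> k < n - 1 then y k else 0))"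

lemma det_shift_resolvent_mat: "det (shift_resolvent_mat n T x) = 1"
  by (subst det_upper_triangular[of _ n])
    (auto simp: shift_resolvent_mat_def upper_triangular_def prod_list_diag_prod)

lemma det_subdiag_elim_mat: "det (subdiag_elim_mat n K d) = 1"
  by (subst det_lower_triangular[of n])
    (auto simp: subdiag_elim_mat_def prod_list_diag_prod intro!: prod.neutral)

lemma det_last_col_elim_mat: "det (last_col_elim_mat n K y) = 1"
  by (subst det_upper_triangular[of _ n])
    (auto simp: last_col_elim_mat_def upper_triangular_def prod_list_diag_prod intro!: prod.neutral)

lemma subdiag_elim_mat_mult_entry:
  assumes "B \<in> carrier_mat n m" "i < n" "c < m"
  shows "(subdiag_elim_mat n K d * B) $$ (i, c) = B $$ (i, c) - (if K < i then d i * B $$ (i - 1, c) else 0)"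
proof -
  have "(subdiag_elim_mat n K d * B) $$ (i, c) =
      (\<Sum>k\<in>{..<n}. ((if k = i then 1 else 0) - (if k = i - 1 then (if K < i then d i else 0) else 0)) * B $$ (k, c))"
    using assms by (auto simp: subdiag_elim_mat_def scalar_prod_def atLeast0LessThan intro!: sum.cong)
  also have "\<dots> = B $$ (i, c) - (if K < i then d i * B $$ (i - 1, c) else 0)"
    using assms by (subst sum_two_indicators_mult) auto
  finally show ?thesis .
qed

lemma mult_last_col_elim_mat_entry:
  assumes "B \<in> carrier_mat m n" "i < m" "c < n"
  shows "(B * last_col_elim_mat n K y) $$ (i, c) =
    B $$ (i, c) + (if c = n - 1 then (\<Sum>k\<in>{K..<n-1}. B $$ (i, k) * y k) else 0)"
proof -
  have "(B * last_col_elim_mat n K y) $$ (i, c) = (\<Sum>k<n. B $$ (i, k) * (if k = c then 1 else 0))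
      + (\<Sum>k<n. if k \<in> {K..<n-1} then (if c = n - 1 then B $$ (i, k) * y k else 0) else 0)"
    using assms by (auto simp: last_col_elim_mat_def scalar_prod_def atLeast0LessThan
        distrib_left sum.distrib if_distrib[of "\<lambda>z. _ * z"] intro!: sum.cong)
  also have "(\<Sum>k<n. if k \<in> {K..<n-1} then (if c = n - 1 then B $$ (i, k) * y k else 0) else 0)
      = (if c = n - 1 then (\<Sum>k\<in>{K..<n-1}. B $$ (i, k) * y k) else 0)"
  proof (cases "c = n - 1")
    case True
    have "{..<n} \<inter> {K..<n-1} = {K..<n-1}" by auto
    then show ?thesis
      by (simp only: True refl if_True sum.inter_restrict[OF finite_lessThan, symmetric])
  next
    case False
    then show ?thesis by (simp only: if_False if_cancel sum.neutral_const)
  qed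
  finally show ?thesis
    using assms by (simp add: if_distrib[of "\<lambda>z. _ * z"] sum.delta cong: if_cong)
qed

lemma sum_dfc_row_Suc_mult:
  assumes "\<And>l. l \<in> {2..N} \<Longrightarrow> (N - l) * T + m < n"
  shows "(\<Sum>k<n. dfc_row N T a mu (Suc m) k * u k) =
    mu (Suc m) * (a 1 * (\<Sum>k<n. dfc_row N T a mu m k * u k) + (\<Sum>l=2..N. a l * u ((N - l) * T + m)))"
proof -
  have "(\<Sum>k<n. dfc_row N T a mu (Suc m) k * u k) = mu (Suc m) * (a 1 * (\<Sum>k<n. dfc_row N T a mu m k * u k)
      + (\<Sum>l=2..N. a l * (\<Sum>k<n. (if k = (N - l) * T + m then 1 else 0) * u k)))"
    by (simp add: algebra_simps sum_distrib_left sum.distrib sum_distrib_right sum.swap[of _ "{2..N}"])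
  also have "(\<Sum>l=2..N. a l * (\<Sum>k<n. (if k = (N - l) * T + m then 1 else 0) * u k))
      = (\<Sum>l=2..N. a l * u ((N - l) * T + m))"
    using assms by (intro sum.cong) (simp_all add: sum_indicator_mult)
  finally show ?thesis .
qed

lemma mod_eq_iff_eq_if_diff_less:
  fixes k c T :: nat
  assumes "k \<le> c" "c - k < T"
  shows "k mod T = c mod T \<longleftrightarrow> k = c"
  using assms mod_eq_dvd_iff_nat[of k c T] dvd_imp_le[of T "c - k"] by auto

locale dfc_char_eval =
  fixes N T :: nat and a mu :: "nat \<Rightarrow> real" and x :: real
  assumes N_ge_2: "N \<ge> 2" and T_pos: "T > 0" and x_nonzero: "x \<noteq> 0"
begin

abbreviation "n \<equiv> (N - 1) * T + 1"
abbreviation "K \<equiv> (N - 2) * T + 1"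
abbreviation "J \<equiv> dfc_jacobian N T a mu"
abbreviation "M \<equiv> mat n n (\<lambda>(i, j). (if i = j then x else 0) - J $$ (i, j))"
abbreviation "U \<equiv> shift_resolvent_mat n T x"
abbreviation "Q \<equiv> \<Sum>l = 1..N. a l * inverse x ^ (l - 1)"

lemma n_eq_K_plus_T: "n = K + T"
proof -
  have "(N - 1) * T = (N - 2) * T + T"
    using N_ge_2 by (cases N; cases "N - 1"; auto)
  then show ?thesis by simp
qed

lemma J_entry:
  "i < n \<Longrightarrow> j < n \<Longrightarrow> J $$ (i, j) =
    (if i < K then (if j = i + T then 1 else 0) else dfc_row N T a mu (i + 1 - K) j)"
  by (simp add: dfc_jacobian_def)

lemma U_eq_power:
  "k < n \<Longrightarrow> c < n \<Longrightarrow> k \<le> c \<Longrightarrow> k mod T = c mod T \<Longrightarrow> (c - k) div T = q \<Longrightarrow>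
    U $$ (k, c) = inverse x ^ q"
  by (simp add: shift_resolvent_mat_def)

lemma U_eq_0: "k < n \<Longrightarrow> c < n \<Longrightarrow> \<not> (k \<le> c \<and> k mod T = c mod T) \<Longrightarrow> U $$ (k, c) = 0"
  by (auto simp: shift_resolvent_mat_def)

lemma U_eq_indicator:
  assumes "i < n" "c < n" "c < i + T"
  shows "U $$ (i, c) = (if c = i then 1 else 0)"
proof -
  have "i \<le> c \<Longrightarrow> i mod T = c mod T \<longleftrightarrow> i = c"
    using assms(3) by (intro mod_eq_iff_eq_if_diff_less) auto
  then show ?thesis using assms by (auto simp: shift_resolvent_mat_def)
qed

lemma U_shift_identity:
  assumes i: "i + T < n" and c: "c < n"
  shows "x * U $$ (i, c) - U $$ (i + T, c) = (if c = i then x else 0)"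
proof (cases "c < i + T")
  case True
  then show ?thesis using assms U_eq_indicator[of i c] by (simp add: shift_resolvent_mat_def)
next
  case False
  define q where "q = (c - (i + T)) div T"
  have diff: "c - i = (c - (i + T)) + T" using False by simp
  have div: "(c - i) div T = Suc q" unfolding diff q_def using T_pos by simp
  show ?thesis
  proof (cases "i mod T = c mod T")
    case True
    have "U $$ (i, c) = inverse x ^ Suc q"
      using assms False True div by (intro U_eq_power) auto
    moreover have "U $$ (i + T, c) = inverse x ^ q"
      using assms False True q_def by (intro U_eq_power) auto
    ultimately show ?thesis using False T_pos x_nonzero by (simp add: mult.assoc[symmetric])
  qed (use assms False T_pos in \<open>simp add: shift_resolvent_mat_def\<close>)
qed

definition feedback_row_mult_U :: "nat \<Rightarrow> nat \<Rightarrow> real" where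
  "feedback_row_mult_U m c = (\<Sum>k<n. dfc_row N T a mu m k * U $$ (k, c))"

lemma feedback_row_mult_U_0: "c < n \<Longrightarrow> feedback_row_mult_U 0 c = U $$ ((N - 1) * T, c)"
  unfolding feedback_row_mult_U_def by (simp add: sum_indicator_mult[where f = "\<lambda>k. U $$ (k, c)", simplified])

lemma feedback_row_mult_U_Suc:
  assumes "m < T"
  shows "feedback_row_mult_U (Suc m) c =
    mu (Suc m) * (a 1 * feedback_row_mult_U m c + (\<Sum>l=2..N. a l * U $$ ((N - l) * T + m, c)))"
  unfolding feedback_row_mult_U_def
proof (rule sum_dfc_row_Suc_mult)
  fix l assume "l \<in> {2..N}"
  then have "(N - l) * T \<le> (N - 2) * T" by (intro mult_le_mono1) auto
  then show "(N - l) * T + m < n" using assms n_eq_K_plus_T by linarith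
qed

lemma M_mult_U_entry:
  assumes i: "i < n" and c: "c < n"
  shows "(M * U) $$ (i, c) = x * U $$ (i, c) - (if i < K then U $$ (i + T, c) else feedback_row_mult_U (i + 1 - K) c)"
proof -
  have "(M * U) $$ (i, c) = (\<Sum>k<n. (if k = i then x else 0) * U $$ (k, c)) - (\<Sum>k<n. J $$ (i, k) * U $$ (k, c))"
    using assms by (simp add: scalar_prod_def atLeast0LessThan shift_resolvent_mat_def
        left_diff_distrib sum_subtractf eq_commute[of i])
  also have "(\<Sum>k<n. (if k = i then x else 0) * U $$ (k, c)) = x * U $$ (i, c)"
    using i by (simp add: sum_indicator_mult)
  also have "(\<Sum>k<n. J $$ (i, k) * U $$ (k, c)) = (if i < K then U $$ (i + T, c) else feedback_row_mult_U (i + 1 - K) c)"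
  proof (cases "i < K")
    case True
    have "(\<Sum>k<n. J $$ (i, k) * U $$ (k, c)) = (\<Sum>k<n. (if k = i + T then 1 else 0) * U $$ (k, c))"
      using i True by (intro sum.cong) (auto simp: J_entry)
    also have "\<dots> = U $$ (i + T, c)"
      using True n_eq_K_plus_T by (simp add: sum_indicator_mult)
    finally show ?thesis using True by simp
  next
    case False
    then show ?thesis
      unfolding feedback_row_mult_U_def using i by (auto simp: J_entry intro: sum.cong)
  qed
  finally show ?thesis .
qed

abbreviation "L \<equiv> subdiag_elim_mat n K (\<lambda>i. mu (i + 1 - K) * a 1)"

definition reduced_char_mat :: "real mat" where
  "reduced_char_mat = L * (M * U)"

lemma reduced_char_mat_carrier: "reduced_char_mat \<in> carrier_mat n n"
  unfolding reduced_char_mat_def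
  by (intro mult_carrier_mat) (auto simp: subdiag_elim_mat_def shift_resolvent_mat_def)

lemma reduced_char_mat_entry:
  "i < n \<Longrightarrow> c < n \<Longrightarrow> reduced_char_mat $$ (i, c) =
    (M * U) $$ (i, c) - (if K < i then mu (i + 1 - K) * a 1 * (M * U) $$ (i - 1, c) else 0)"
  unfolding reduced_char_mat_def
  by (rule subdiag_elim_mat_mult_entry) (auto simp: shift_resolvent_mat_def)

lemma reduced_char_mat_shift_row:
  assumes i: "i < K" and c: "c < n"
  shows "reduced_char_mat $$ (i, c) = (if c = i then x else 0)"
proof -
  have "i < n" "i + T < n" using i n_eq_K_plus_T by linarith+
  then show ?thesis
    using i reduced_char_mat_entry[of i c] M_mult_U_entry[of i c] U_shift_identity[of i c] c by simp
qed

lemma feedback_col_split: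
  assumes "l \<in> {2..N}"
  shows "(N - 2) * T = (N - l) * T + (l - 2) * T"
proof -
  have "N - 2 = (N - l) + (l - 2)" using assms by auto
  then show ?thesis by (metis add_mult_distrib)
qed

lemma U_feedback_col_0:
  assumes l: "l \<in> {2..N}" and s: "1 \<le> s" "s \<le> T"
  shows "U $$ ((N - l) * T, (N - 2) * T + s) = (if s = T then inverse x ^ (l - 1) else 0)"
proof -
  have c: "(N - 2) * T + s = (N - l) * T + ((l - 2) * T + s)"
    using feedback_col_split[OF l] by simp
  have bounds: "(N - l) * T < n" "(N - l) * T + ((l - 2) * T + s) < n"
    using n_eq_K_plus_T s c by linarith+
  show ?thesis
  proof (cases "s = T")
    case True
    have "((l - 2) * T + s) div T = l - 1"
      using True T_pos l by (simp add: Suc_diff_Suc numeral_2_eq_2)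
    then have "U $$ ((N - l) * T, (N - 2) * T + s) = inverse x ^ (l - 1)"
      unfolding c using True by (intro U_eq_power bounds) simp_all
    then show ?thesis using True by simp
  next
    case False
    then have "U $$ ((N - l) * T, (N - 2) * T + s) = 0"
      unfolding c using s by (intro U_eq_0 bounds) simp
    then show ?thesis using False by simp
  qed
qed

lemma U_feedback_col:
  assumes l: "l \<in> {2..N}" and r: "1 \<le> r" "r < T" and s: "1 \<le> s" "s \<le> T"
  shows "U $$ ((N - l) * T + r, (N - 2) * T + s) = (if s = r then inverse x ^ (l - 2) else 0)"
proof -
  have c: "(N - 2) * T + s = (N - l) * T + ((l - 2) * T + s)"
    using feedback_col_split[OF l] by simp
  have bounds: "(N - l) * T + r < n" "(N - l) * T + ((l - 2) * T + s) < n"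
    using n_eq_K_plus_T r s c by linarith+
  show ?thesis
  proof (cases "s = r")
    case True
    then have "U $$ ((N - l) * T + r, (N - 2) * T + s) = inverse x ^ (l - 2)"
      unfolding c using T_pos by (intro U_eq_power bounds) simp_all
    then show ?thesis using True by simp
  next
    case False
    have "s mod T \<noteq> r"
      using False r s by (cases "s = T") simp_all
    then have "U $$ ((N - l) * T + r, (N - 2) * T + s) = 0"
      unfolding c using False r by (intro U_eq_0 bounds) simp
    then show ?thesis using False by simp
  qed
qed

lemma Q_split: "Q = a 1 + (\<Sum>l = 2..N. a l * inverse x ^ (l - 1))"
  using sum.atLeast_Suc_atMost[of 1 N "\<lambda>l. a l * inverse x ^ (l - 1)"] N_ge_2
  by (simp add: numeral_2_eq_2)

lemma x_mult_Q: "x * Q = a 1 * x + (\<Sum>l = 2..N. a l * inverse x ^ (l - 2))"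
proof -
  have "x * Q = a 1 * x + (\<Sum>l = 2..N. a l * (x * inverse x ^ (l - 1)))"
    unfolding Q_split by (simp add: algebra_simps sum_distrib_left)
  also have "(\<Sum>l = 2..N. a l * (x * inverse x ^ (l - 1))) = (\<Sum>l = 2..N. a l * inverse x ^ (l - 2))"
  proof (rule sum.cong[OF refl])
    fix l assume "l \<in> {2..N}"
    then have "l - 1 = Suc (l - 2)" by auto
    then show "a l * (x * inverse x ^ (l - 1)) = a l * inverse x ^ (l - 2)"
      using x_nonzero by (simp add: mult.assoc[symmetric])
  qed
  finally show ?thesis .
qed

lemma feedback_block_col:
  assumes "K \<le> c" "c < n"
  obtains s where "c = (N - 2) * T + s" "1 \<le> s" "s \<le> T"
  using assms n_eq_K_plus_T by (intro that[of "c - (N - 2) * T"]) linarith+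

lemma reduced_char_mat_first_feedback_row:
  assumes c: "K \<le> c" "c < n"
  shows "reduced_char_mat $$ (K, c) = (if c = K then x else 0) - (if c = n - 1 then mu 1 * Q else 0)"
proof -
  obtain s where s: "c = (N - 2) * T + s" "1 \<le> s" "s \<le> T"
    using feedback_block_col[OF c] .
  have last: "c = n - 1 \<longleftrightarrow> s = T" using s n_eq_K_plus_T by auto
  have K: "K < n" using n_eq_K_plus_T T_pos by linarith
  have "reduced_char_mat $$ (K, c) = x * U $$ (K, c) - feedback_row_mult_U 1 c"
    using reduced_char_mat_entry[OF K c(2)] M_mult_U_entry[OF K c(2)] by simp
  also have "feedback_row_mult_U 1 c = mu 1 * (a 1 * feedback_row_mult_U 0 c + (\<Sum>l = 2..N. a l * U $$ ((N - l) * T, c)))"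
    using feedback_row_mult_U_Suc[of 0 c] T_pos by simp
  also have "feedback_row_mult_U 0 c = (if c = n - 1 then 1 else 0)"
    using feedback_row_mult_U_0 U_eq_indicator[of "n - 1" c] c T_pos by simp
  also have "U $$ (K, c) = (if c = K then 1 else 0)"
    using U_eq_indicator[OF K c(2)] c n_eq_K_plus_T by simp
  also have "(\<Sum>l = 2..N. a l * U $$ ((N - l) * T, c)) =
      (\<Sum>l = 2..N. a l * (if c = n - 1 then inverse x ^ (l - 1) else 0))"
  proof (intro sum.cong refl)
    fix l assume "l \<in> {2..N}"
    then show "a l * U $$ ((N - l) * T, c) = a l * (if c = n - 1 then inverse x ^ (l - 1) else 0)"
      using U_feedback_col_0[of l s] s(2,3) unfolding s(1)[symmetric] last by simp
  qed
  finally show ?thesis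
    unfolding Q_split by (cases "c = n - 1") (simp_all add: algebra_simps)
qed

lemma reduced_char_mat_feedback_row:
  assumes i: "K < i" "i < n" and c: "K \<le> c" "c < n"
  shows "reduced_char_mat $$ (i, c) = (if c = i then x else 0) - (if c = i - 1 then mu (i + 1 - K) * x * Q else 0)"
proof -
  define r where "r = i - K"
  have r: "1 \<le> r" "r < T" "i + 1 - K = Suc r" "i - 1 + 1 - K = r"
    using i n_eq_K_plus_T unfolding r_def by linarith+
  obtain s where s: "c = (N - 2) * T + s" "1 \<le> s" "s \<le> T"
    using feedback_block_col[OF c] .
  have prev: "c = i - 1 \<longleftrightarrow> s = r" using s i unfolding r_def by auto
  have i': "i - 1 < n" "\<not> i < K" "\<not> i - 1 < K" using i by simp_all
  have "reduced_char_mat $$ (i, c) = (x * U $$ (i, c) - feedback_row_mult_U (Suc r) c)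
      - mu (Suc r) * a 1 * (x * U $$ (i - 1, c) - feedback_row_mult_U r c)"
    by (simp only: reduced_char_mat_entry[OF i(2) c(2)] M_mult_U_entry[OF i(2) c(2)] M_mult_U_entry[OF i'(1) c(2)]
        i(1) i'(2,3) r(3,4) if_True if_False)
  also have "feedback_row_mult_U (Suc r) c =
      mu (Suc r) * (a 1 * feedback_row_mult_U r c + (\<Sum>l = 2..N. a l * U $$ ((N - l) * T + r, c)))"
    using feedback_row_mult_U_Suc[OF r(2)] .
  also have "U $$ (i, c) = (if c = i then 1 else 0)"
    using U_eq_indicator[OF i(2) c(2)] c i n_eq_K_plus_T by linarith
  also have "U $$ (i - 1, c) = (if c = i - 1 then 1 else 0)"
    using U_eq_indicator[OF i'(1) c(2)] c i n_eq_K_plus_T by linarith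
  also have "(\<Sum>l = 2..N. a l * U $$ ((N - l) * T + r, c)) =
      (\<Sum>l = 2..N. a l * (if c = i - 1 then inverse x ^ (l - 2) else 0))"
  proof (intro sum.cong refl)
    fix l assume "l \<in> {2..N}"
    then show "a l * U $$ ((N - l) * T + r, c) = a l * (if c = i - 1 then inverse x ^ (l - 2) else 0)"
      using U_feedback_col[of l r s] s(2,3) r unfolding s(1)[symmetric] prev by simp
  qed
  finally have "reduced_char_mat $$ (i, c) = x * (if c = i then 1 else 0)
      - mu (Suc r) * a 1 * x * (if c = i - 1 then 1 else 0)
      - mu (Suc r) * (\<Sum>l = 2..N. a l * (if c = i - 1 then inverse x ^ (l - 2) else 0))"
    by (simp add: algebra_simps)
  also have "\<dots> = (if c = i then x else 0) - (if c = i - 1 then mu (Suc r) * x * Q else 0)"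
  proof -
    have xQ: "mu (Suc r) * x * Q = mu (Suc r) * (a 1 * x + (\<Sum>l = 2..N. a l * inverse x ^ (l - 2)))"
      by (simp only: mult.assoc x_mult_Q)
    show ?thesis
      unfolding xQ using i by (cases "c = i"; cases "c = i - 1") (simp_all add: algebra_simps sum_distrib_left)
  qed
  finally show ?thesis using r by simp
qed

lemma reduced_char_mat_upper_zero:
  assumes ic: "i < c" and c: "c < n - 1"
  shows "reduced_char_mat $$ (i, c) = 0"
proof -
  have bounds: "i < n" "c < n" using ic c by linarith+
  consider (shift) "i < K" | (first) "i = K" | (feedback) "K < i" by linarith
  then show ?thesis
  proof cases
    case shift
    then show ?thesis using ic reduced_char_mat_shift_row[OF shift bounds(2)] by simp
  next
    case first
    then show ?thesis using ic c reduced_char_mat_first_feedback_row[OF _ bounds(2)] by simp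
  next
    case feedback
    have "K \<le> c" "c \<noteq> i" "c \<noteq> i - 1" using feedback ic by simp_all
    then show ?thesis using reduced_char_mat_feedback_row[OF feedback bounds(1) _ bounds(2)] by simp
  qed
qed

lemma reduced_char_mat_diag:
  assumes i: "i < n - 1"
  shows "reduced_char_mat $$ (i, i) = x"
proof -
  have bound: "i < n" using i by linarith
  consider (shift) "i < K" | (first) "i = K" | (feedback) "K < i" by linarith
  then show ?thesis
  proof cases
    case shift
    then show ?thesis using reduced_char_mat_shift_row[OF shift bound] by simp
  next
    case first
    then show ?thesis using i reduced_char_mat_first_feedback_row[OF _ bound] by simp
  next
    case feedback
    then have "i - 1 \<noteq> i" by simp
    then show ?thesis using feedback reduced_char_mat_feedback_row[OF feedback bound _ bound] by simp
  qed
qed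

(* Chosen so that adding elim_coeff (k + 1 - K) times column k, for K \<le> k < n - 1, clears the
   last column of reduced_char_mat above the diagonal. *)
definition elim_coeff :: "nat \<Rightarrow> real" where
  "elim_coeff m = (\<Prod>k = 1..m. mu k) * Q ^ m / x"

lemma x_mult_elim_coeff: "x * elim_coeff m = (\<Prod>k = 1..m. mu k) * Q ^ m"
  unfolding elim_coeff_def using x_nonzero by simp

lemma x_mult_elim_coeff_Suc: "x * elim_coeff (Suc m) = mu (Suc m) * x * Q * elim_coeff m"
  unfolding elim_coeff_def using x_nonzero by (simp add: field_simps)

definition triangular_char_mat :: "real mat" where
  "triangular_char_mat = reduced_char_mat * last_col_elim_mat n K (\<lambda>k. elim_coeff (k + 1 - K))"

lemma triangular_char_mat_entry:
  "i < n \<Longrightarrow> c < n \<Longrightarrow> triangular_char_mat $$ (i, c) = reduced_char_mat $$ (i, c)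
    + (if c = n - 1 then (\<Sum>k\<in>{K..<n-1}. reduced_char_mat $$ (i, k) * elim_coeff (k + 1 - K)) else 0)"
  unfolding triangular_char_mat_def by (rule mult_last_col_elim_mat_entry[OF reduced_char_mat_carrier])

lemma triangular_char_mat_last_col:
  assumes i: "i < n"
  shows "triangular_char_mat $$ (i, n - 1) = (if i = n - 1 then x - (\<Prod>k = 1..T. mu k) * Q ^ T else 0)"
proof -
  have last: "n - 1 < n" "K \<le> n - 1" using n_eq_K_plus_T T_pos by simp_all
  consider (shift) "i < K" | (first) "i = K" | (feedback) "K < i" by linarith
  then show ?thesis
  proof cases
    case shift
    have "(\<Sum>k\<in>{K..<n-1}. reduced_char_mat $$ (i, k) * elim_coeff (k + 1 - K)) = 0"
    proof (intro sum.neutral ballI)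
      fix k assume "k \<in> {K..<n-1}"
      then show "reduced_char_mat $$ (i, k) * elim_coeff (k + 1 - K) = 0"
        using shift reduced_char_mat_shift_row[OF shift, of k] by simp
    qed
    moreover have "i \<noteq> n - 1" using shift n_eq_K_plus_T T_pos by linarith
    ultimately show ?thesis
      using triangular_char_mat_entry[OF i last(1)] reduced_char_mat_shift_row[OF shift last(1)] by simp
  next
    case first
    have "(\<Sum>k\<in>{K..<n-1}. reduced_char_mat $$ (K, k) * elim_coeff (k + 1 - K))
        = (\<Sum>k\<in>{K..<n-1}. ((if k = K then x else 0) - (if k = n - 1 then mu 1 * Q else 0)) * elim_coeff (k + 1 - K))"
    proof (intro sum.cong refl)
      fix k assume "k \<in> {K..<n-1}"
      then have "K \<le> k" "k < n" by auto
      then show "reduced_char_mat $$ (K, k) * elim_coeff (k + 1 - K) =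
          ((if k = K then x else 0) - (if k = n - 1 then mu 1 * Q else 0)) * elim_coeff (k + 1 - K)"
        by (simp only: reduced_char_mat_first_feedback_row)
    qed
    also have "\<dots> = (if K < n - 1 then x * elim_coeff 1 else 0)"
      by (subst sum_two_indicators_mult) auto
    also have "x * elim_coeff 1 = mu 1 * Q"
      using x_mult_elim_coeff[of 1] by simp
    finally have sum: "(\<Sum>k\<in>{K..<n-1}. reduced_char_mat $$ (K, k) * elim_coeff (k + 1 - K))
        = (if K < n - 1 then mu 1 * Q else 0)" .
    show ?thesis
    proof (cases "T = 1")
      case True
      then have "K = n - 1" using N_ge_2 by simp
      then show ?thesis
        using triangular_char_mat_entry[OF i last(1)] reduced_char_mat_first_feedback_row[OF last(2,1)] first True
        by simp
    next
      case False
      then have "K < n - 1" using T_pos n_eq_K_plus_T by linarith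
      then show ?thesis
        using triangular_char_mat_entry[OF i last(1)] reduced_char_mat_first_feedback_row[OF last(2,1)] first sum by simp
    qed
  next
    case feedback
    have "(\<Sum>k\<in>{K..<n-1}. reduced_char_mat $$ (i, k) * elim_coeff (k + 1 - K))
        = (\<Sum>k\<in>{K..<n-1}. ((if k = i then x else 0) - (if k = i - 1 then mu (i + 1 - K) * x * Q else 0))
            * elim_coeff (k + 1 - K))"
    proof (intro sum.cong refl)
      fix k assume "k \<in> {K..<n-1}"
      then have "K \<le> k" "k < n" by auto
      then show "reduced_char_mat $$ (i, k) * elim_coeff (k + 1 - K) =
          ((if k = i then x else 0) - (if k = i - 1 then mu (i + 1 - K) * x * Q else 0)) * elim_coeff (k + 1 - K)"
        by (simp only: reduced_char_mat_feedback_row[OF feedback i])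
    qed
    also have "\<dots> = (if i < n - 1 then x * elim_coeff (i + 1 - K) else 0)
        - mu (i + 1 - K) * x * Q * elim_coeff (i - 1 + 1 - K)"
      using feedback i by (subst sum_two_indicators_mult) auto
    also have "mu (i + 1 - K) * x * Q * elim_coeff (i - 1 + 1 - K) = x * elim_coeff (i + 1 - K)"
    proof -
      have "i + 1 - K = Suc (i - K)" "i - 1 + 1 - K = i - K" using feedback by auto
      then show ?thesis by (simp only: x_mult_elim_coeff_Suc)
    qed
    finally have sum: "(\<Sum>k\<in>{K..<n-1}. reduced_char_mat $$ (i, k) * elim_coeff (k + 1 - K))
        = (if i < n - 1 then 0 else - x * elim_coeff (i + 1 - K))"
      by simp
    have "n - 1 \<noteq> i - 1" using i feedback by linarith
    then have entry: "triangular_char_mat $$ (i, n - 1) = (if n - 1 = i then x else 0) + (\<Sum>k\<in>{K..<n-1}.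
        reduced_char_mat $$ (i, k) * elim_coeff (k + 1 - K))"
      using triangular_char_mat_entry[OF i last(1)] reduced_char_mat_feedback_row[OF feedback i last(2,1)]
      by simp
    show ?thesis
    proof (cases "i = n - 1")
      case True
      then have "i + 1 - K = T" using n_eq_K_plus_T by linarith
      then show ?thesis
        unfolding entry sum using True x_mult_elim_coeff[of T] by simp
    next
      case False
      then show ?thesis
        unfolding entry sum using i by simp
    qed
  qed
qed

lemma det_triangular_char_mat:
  "det triangular_char_mat = x ^ (n - 1) * (x - (\<Prod>k = 1..T. mu k) * Q ^ T)"
proof -
  have W: "triangular_char_mat \<in> carrier_mat n n"
    unfolding triangular_char_mat_def using reduced_char_mat_carrier by (simp add: last_col_elim_mat_def)
  have "det triangular_char_mat = prod_list (diag_mat triangular_char_mat)"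
  proof (rule det_lower_triangular[OF _ W])
    fix i c assume ic: "i < c" and c: "c < n"
    show "triangular_char_mat $$ (i, c) = 0"
    proof (cases "c = n - 1")
      case True
      then show ?thesis using triangular_char_mat_last_col[of i] ic c by simp
    next
      case False
      then show ?thesis
        using triangular_char_mat_entry[of i c] reduced_char_mat_upper_zero[OF ic] ic c by simp
    qed
  qed
  also have "\<dots> = (\<Prod>i<n. triangular_char_mat $$ (i, i))"
    using W by (simp add: prod_list_diag_prod atLeast0LessThan)
  also have "\<dots> = (\<Prod>i<n - 1. triangular_char_mat $$ (i, i)) * triangular_char_mat $$ (n - 1, n - 1)"
    using prod.lessThan_Suc[of "\<lambda>i. triangular_char_mat $$ (i, i)" "(N - 1) * T"] by simp
  also have "(\<Prod>i<n - 1. triangular_char_mat $$ (i, i)) = (\<Prod>i<n - 1. x)"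
    using triangular_char_mat_entry reduced_char_mat_diag by (intro prod.cong refl) simp
  finally show ?thesis
    using triangular_char_mat_last_col[of "n - 1"] by simp
qed

lemma det_xI_minus_J: "det M = x ^ (n - 1) * (x - (\<Prod>k = 1..T. mu k) * Q ^ T)"
proof -
  let ?E = "last_col_elim_mat n K (\<lambda>k. elim_coeff (k + 1 - K))"
  have carriers: "L \<in> carrier_mat n n" "M \<in> carrier_mat n n" "U \<in> carrier_mat n n" "?E \<in> carrier_mat n n"
    by (simp_all add: subdiag_elim_mat_def shift_resolvent_mat_def last_col_elim_mat_def)
  have "det triangular_char_mat = det reduced_char_mat * det ?E"
    unfolding triangular_char_mat_def by (rule det_mult[OF reduced_char_mat_carrier carriers(4)])
  also have "det reduced_char_mat = det L * det (M * U)"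
    unfolding reduced_char_mat_def by (rule det_mult[OF carriers(1) mult_carrier_mat[OF carriers(2,3)]])
  also have "det (M * U) = det M * det U"
    by (rule det_mult[OF carriers(2,3)])
  finally have "det triangular_char_mat = det M"
    by (simp add: det_subdiag_elim_mat det_shift_resolvent_mat det_last_col_elim_mat)
  then show ?thesis
    using det_triangular_char_mat by simp
qed

lemma Q_mult_power: "Q * x ^ (N - 1) = (\<Sum>l = 1..N. a l * x ^ (N - l))"
  unfolding sum_distrib_right
proof (rule sum.cong[OF refl])
  fix l assume l: "l \<in> {1..N}"
  have "x ^ (N - 1) = x ^ (l - 1) * x ^ (N - l)" using l by (simp add: power_add[symmetric])
  then show "a l * inverse x ^ (l - 1) * x ^ (N - 1) = a l * x ^ (N - l)"
    using x_nonzero by (simp add: power_inverse field_simps)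
qed

lemma poly_char_poly_dfc_jacobian:
  "poly (char_poly J) x = poly (monom 1 n - Polynomial.smult (\<Prod>m = 1..T. mu m)
      ((\<Sum>l = 1..N. monom (a l) (N - l)) ^ T)) x"
proof -
  have J: "J \<in> carrier_mat n n" by (simp add: dfc_jacobian_def)
  have "- char_matrix J x = M"
    using J by (intro eq_matI) (auto simp: char_matrix_def)
  then have "poly (char_poly J) x = det M" using char_poly_matrix[OF J, of x] by simp
  also have "\<dots> = x * x ^ (n - 1) - (\<Prod>k = 1..T. mu k) * (Q ^ T * x ^ (n - 1))"
    unfolding det_xI_minus_J by (simp add: algebra_simps)
  also have "\<dots> = x ^ n - (\<Prod>k = 1..T. mu k) * (Q * x ^ (N - 1)) ^ T"
    by (simp add: power_mult power_mult_distrib)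
  also have "\<dots> = x ^ n - (\<Prod>k = 1..T. mu k) * (\<Sum>l = 1..N. a l * x ^ (N - l)) ^ T"
    by (simp only: Q_mult_power)
  finally show ?thesis by (simp add: poly_monom poly_sum)
qed

end

theorem theorem1:
  fixes N T :: nat and a mu :: "nat \<Rightarrow> real"
  assumes "N \<ge> 2" and "T \<ge> 1"
    and "(\<Sum>l = 1..N. a l) = 1"
  shows "char_poly (dfc_jacobian N T a mu) =
           monom 1 ((N - 1) * T + 1)
           - Polynomial.smult (\<Prod>m = 1..T. mu m) ((\<Sum>l = 1..N. monom (a l) (N - l)) ^ T)"
proof (rule poly_eqI_cofinite[of "{0}"], goal_cases)
  case (1 x)
  then interpret dfc_char_eval N T a mu x
    using assms(1,2) by unfold_locales auto
  show ?case
    by (rule poly_char_poly_dfc_jacobian)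
qed simp

end
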